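(* Let $f\in K\{X\}_\infty$ be homogeneous of degree $n$. Then $f$ is primitive if and only if $\partial_T(f)=0$ for all monomials $T$ with $1\le\deg T<\frac{n+1}{2}$.
   Context: $K$ is a field of characteristic $0$ and $X=\{x_1,x_2,\dots\}$ a finite or countable set of variables. A planar rooted tree is reduced if no vertex has exactly one incoming edge. $K\{X\}_\infty$ has basis the monomials: the empty tree $1$ and all planar reduced rooted trees with leaves labelled by elements of $X$, graded by number of leaves (degree); for $k\ge2$, $\vee^k$ grafts $k$ nonempty trees (in order) onto a new root, extended multilinearly, with unit conventions (arguments $1$ omitted, $\vee^1=\mathrm{id}$, $\vee^k(1,\dots,1)=1$). $K\{X\}_\infty\otimes K\{X\}_\infty$ carries the operations componentwise, and the co-addition $\Delta_a$ is the unique unital homomorphism with $\Delta_a(x_i)=x_i\otimes1+1\otimes x_i$; $f$ is primitive if $\Delta_a(f)=f\otimes1+1\otimes f$. For a monomial $T$, the linear map $\partial_T$ is defined by $\Delta_a(f)=\sum_T T\otimes\partial_T(f)$ (sum over all monomials $T$). *)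

theory Defs
  imports Complex_Main "HOL-Library.Countable"
begin

text \<open>Planar rooted trees with leaves labelled by variables.  The empty tree
  (the unit 1) is represented by Node [].\<close>
datatype 'x tree = Leaf 'x | Node "'x tree list"

fun reduced_ne :: "'x tree \<Rightarrow> bool" where
  "reduced_ne (Leaf x) = True"
| "reduced_ne (Node ts) = (2 \<le> length ts \<and> (\<forall>t\<in>set ts. reduced_ne t))"

definition monomial :: "'x tree \<Rightarrow> bool" where
  "monomial T \<longleftrightarrow> T = Node [] \<or> reduced_ne T"

fun deg :: "'x tree \<Rightarrow> nat" where
  "deg (Leaf x) = 1"
| "deg (Node ts) = sum_list (map deg ts)"

text \<open>The grafting operation vee^k on monomials, with the unit conventions:
  arguments 1 are omitted, vee^1 = id, vee^k(1,...,1) = 1.\<close>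
definition vee :: "'x tree list \<Rightarrow> 'x tree" where
  "vee ts = (let us = filter (\<lambda>t. t \<noteq> Node []) ts in
              (case us of [] \<Rightarrow> Node [] | [t] \<Rightarrow> t | _ \<Rightarrow> Node us))"

text \<open>Co-addition on a monomial, as the list of terms A (x) B (with multiplicity):
  Delta(x) = x(x)1 + 1(x)x, Delta(1) = 1(x)1, and Delta is a homomorphism for the
  vee operations (acting componentwise, extended multilinearly).\<close>
fun cop :: "'x tree \<Rightarrow> ('x tree \<times> 'x tree) list" where
  "cop (Leaf x) = [(Leaf x, Node []), (Node [], Leaf x)]"
| "cop (Node ts) =
     map (\<lambda>ps. (vee (map fst ps), vee (map snd ps))) (product_lists (map cop ts))"

definition KX :: "('x tree \<Rightarrow> 'k::field) set" where
  "KX = {f. finite {T. f T \<noteq> 0} \<and> (\<forall>T. f T \<noteq> 0 \<longrightarrow> monomial T)}"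

definition homogeneous :: "nat \<Rightarrow> ('x tree \<Rightarrow> 'k::field) \<Rightarrow> bool" where
  "homogeneous n f \<longleftrightarrow> (\<forall>T. f T \<noteq> 0 \<longrightarrow> deg T = n)"

text \<open>Co-addition, extended linearly; an element of the tensor product is given by
  its coefficients on the basis A (x) B of pairs of monomials.\<close>
definition coadd :: "('x tree \<Rightarrow> 'k::field) \<Rightarrow> ('x tree \<times> 'x tree \<Rightarrow> 'k)" where
  "coadd f = (\<lambda>AB. \<Sum>T\<in>{T. f T \<noteq> 0}. f T * of_nat (count_list (cop T) AB))"

definition primitive :: "('x tree \<Rightarrow> 'k::field) \<Rightarrow> bool" where
  "primitive f \<longleftrightarrow> coadd f =
     (\<lambda>(A, B). (if B = Node [] then f A else 0) + (if A = Node [] then f B else 0))"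

text \<open>partial_T f, defined by Delta(f) = sum_T T (x) partial_T(f).\<close>
definition partial :: "'x tree \<Rightarrow> ('x tree \<Rightarrow> 'k::field) \<Rightarrow> ('x tree \<Rightarrow> 'k)" where
  "partial T f = (\<lambda>S. coadd f (T, S))"

end

theory Submission
  imports Defs "HOL-Library.Multiset"
begin

(* Co-addition is cocommutative, and in the co-addition of a monomial T the only term
   with unit right factor is T (x) 1.  So for f without constant term,
   Delta(f) - f (x) 1 - 1 (x) f consists of the terms A (x) B with A, B non-units, and by
   homogeneity deg A + deg B = n.  One of the two degrees is then below (n+1)/2, so by
   symmetry the coefficient of A (x) B is a coefficient of some partial_T f with
   1 <= deg T < (n+1)/2. *)

lemma vee_eq_unit_iff: "vee ts = Node [] \<longleftrightarrow> (\<forall>t\<in>set ts. t = Node [])"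
  unfolding vee_def Let_def
  by (cases "filter (\<lambda>t. t \<noteq> Node []) ts" rule: remdups_adj.cases)
    (fastforce simp: filter_empty_conv dest: arg_cong[of _ _ set])+

lemma deg_vee: "deg (vee ts) = sum_list (map deg ts)"
proof -
  have "sum_list (map deg (filter (\<lambda>t. t \<noteq> Node []) ts)) = sum_list (map deg ts)"
    by (induction ts) auto
  then show ?thesis
    unfolding vee_def Let_def
    by (cases "filter (\<lambda>t. t \<noteq> Node []) ts" rule: remdups_adj.cases) auto
qed

lemma monomial_vee: "\<forall>t\<in>set ts. monomial t \<Longrightarrow> monomial (vee ts)"
  unfolding vee_def Let_def
  by (cases "filter (\<lambda>t. t \<noteq> Node []) ts" rule: remdups_adj.cases)
    (fastforce simp: monomial_def dest: arg_cong[of _ _ set])+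

lemma vee_eq_Node_if_reduced:
  "2 \<le> length ts \<Longrightarrow> \<forall>t\<in>set ts. reduced_ne t \<Longrightarrow> vee ts = Node ts"
  unfolding vee_def Let_def
  by (cases ts rule: remdups_adj.cases) (auto simp: filter_id_conv)

lemma mem_cop_NodeE:
  assumes "(A, B) \<in> set (cop (Node ts))"
  obtains ps where "list_all2 (\<lambda>p t. p \<in> set (cop t)) ps ts"
    and "A = vee (map fst ps)" and "B = vee (map snd ps)"
proof -
  from assms obtain ps where ps: "ps \<in> set (product_lists (map cop ts))"
    and "A = vee (map fst ps)" "B = vee (map snd ps)" by auto
  moreover from ps have "list_all2 (\<lambda>p t. p \<in> set (cop t)) ps ts"
    by (simp add: product_lists_set list_all2_map2)
  ultimately show thesis using that by blast
qed

lemma deg_mem_cop: "(A, B) \<in> set (cop T) \<Longrightarrow> deg A + deg B = deg T"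
proof (induction T arbitrary: A B)
  case (Leaf x)
  then show ?case by auto
next
  case (Node ts)
  obtain ps where ps: "list_all2 (\<lambda>p t. p \<in> set (cop t)) ps ts"
    and AB: "A = vee (map fst ps)" "B = vee (map snd ps)"
    using Node.prems by (elim mem_cop_NodeE)
  from ps Node.IH have "list_all2 (\<lambda>p t. deg (fst p) + deg (snd p) = deg t) ps ts"
    by (auto simp: list_all2_conv_all_nth)
  then have "sum_list (map deg (map fst ps)) + sum_list (map deg (map snd ps))
      = sum_list (map deg ts)"
    by (induction rule: list_all2_induct) auto
  then show ?case using AB by (simp only: deg_vee deg.simps)
qed

lemma monomial_mem_cop:
  "monomial T \<Longrightarrow> (A, B) \<in> set (cop T) \<Longrightarrow> monomial A \<and> monomial B"
proof (induction T arbitrary: A B)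
  case (Leaf x)
  then show ?case by (auto simp: monomial_def)
next
  case (Node ts)
  obtain ps where ps: "list_all2 (\<lambda>p t. p \<in> set (cop t)) ps ts"
    and AB: "A = vee (map fst ps)" "B = vee (map snd ps)"
    using Node.prems by (elim mem_cop_NodeE)
  have "\<forall>t\<in>set ts. monomial t"
    using Node.prems(1) by (auto simp: monomial_def)
  with ps Node.IH have "\<forall>p\<in>set ps. monomial (fst p) \<and> monomial (snd p)"
    by (fastforce simp: list_all2_conv_all_nth in_set_conv_nth)
  then show ?case using AB by (auto intro!: monomial_vee)
qed

lemma mset_product_lists_cong:
  "list_all2 (\<lambda>xs ys. mset xs = mset ys) xss yss \<Longrightarrow>
    mset (product_lists xss) = mset (product_lists yss)"
  by (induction rule: list_all2_induct)
    (simp_all add: mset_concat comp_def flip: sum_mset_sum_list)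

lemma product_lists_map_map: "product_lists (map (map f) xss) = map (map f) (product_lists xss)"
  by (induction xss) (auto simp: map_concat comp_def)

lemma mset_map_swap_cop: "mset (map prod.swap (cop T)) = mset (cop T)"
proof (induction T)
  case (Leaf x)
  then show ?case by auto
next
  case (Node ts)
  define h :: "('a tree \<times> 'a tree) list \<Rightarrow> 'a tree \<times> 'a tree"
    where "h = (\<lambda>ps. (vee (map fst ps), vee (map snd ps)))"
  have "list_all2 (\<lambda>xs ys. mset xs = mset ys) (map (map prod.swap) (map cop ts)) (map cop ts)"
    using Node.IH by (auto simp: list_all2_conv_all_nth)
  then have perm: "mset (product_lists (map (map prod.swap) (map cop ts))) =
      mset (product_lists (map cop ts))"
    by (rule mset_product_lists_cong)
  have "map prod.swap (cop (Node ts)) = map h (map (map prod.swap) (product_lists (map cop ts)))"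
    by (simp add: h_def comp_def)
  also have "\<dots> = map h (product_lists (map (map prod.swap) (map cop ts)))"
    by (simp only: product_lists_map_map)
  finally have "mset (map prod.swap (cop (Node ts))) =
      image_mset h (mset (product_lists (map (map prod.swap) (map cop ts))))"
    by simp
  also have "\<dots> = mset (cop (Node ts))"
    by (simp only: perm) (simp add: h_def)
  finally show ?case .
qed

lemma count_list_cop_swap: "count_list (cop T) (B, A) = count_list (cop T) (A, B)"
proof -
  have "count_list (cop T) (B, A) = count (mset (map prod.swap (cop T))) (prod.swap (A, B))"
    by (simp only: mset_map_swap_cop count_mset swap_simp)
  also have "\<dots> = count_list (cop T) (A, B)"
    by (simp only: count_mset count_list_map_conv[OF inj_swap])
  finally show ?thesis .
qed

lemma filter_product_lists:
  "filter (\<lambda>ps. \<forall>p\<in>set ps. P p) (product_lists xss) = product_lists (map (filter P) xss)"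
proof (induction xss)
  case Nil
  then show ?case by simp
next
  case (Cons xs xss)
  have "filter (\<lambda>ps. \<forall>p\<in>set ps. P p) (map (Cons x) (product_lists xss)) =
     (if P x then map (Cons x) (product_lists (map (filter P) xss)) else [])" for x
    using Cons by (simp add: filter_map comp_def)
  then show ?case by (induction xs) auto
qed

lemma product_lists_singletons: "product_lists (map (\<lambda>x. [f x]) xs) = [map f xs]"
  by (induction xs) auto

lemma filter_cop_unit_right:
  "monomial T \<Longrightarrow> filter (\<lambda>p. snd p = Node []) (cop T) = [(T, Node [])]"
proof (induction T)
  case (Leaf x)
  then show ?case by auto
next
  case (Node ts)
  show ?case
  proof (cases "ts = []")
    case True
    then show ?thesis by (simp add: vee_def)
  next
    case False
    then have reduced: "2 \<le> length ts" "\<forall>t\<in>set ts. reduced_ne t"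
      using Node.prems by (auto simp: monomial_def)
    have factors:
      "map (filter (\<lambda>p. snd p = Node [])) (map cop ts) = map (\<lambda>t. [(t, Node [])]) ts"
      using Node.IH reduced(2) by (auto simp: monomial_def)
    have "filter (\<lambda>p. snd p = Node []) (cop (Node ts)) =
       map (\<lambda>ps. (vee (map fst ps), vee (map snd ps)))
         (filter (\<lambda>ps. \<forall>p\<in>set ps. snd p = Node []) (product_lists (map cop ts)))"
      by (simp add: filter_map comp_def vee_eq_unit_iff)
    also have "\<dots> = map (\<lambda>ps. (vee (map fst ps), vee (map snd ps)))
         (product_lists (map (\<lambda>t. [(t, Node [])]) ts))"
      by (simp only: filter_product_lists factors)
    also have "\<dots> = [(vee ts, vee (map (\<lambda>_. Node []) ts))]"
      by (simp add: product_lists_singletons comp_def)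
    also have "\<dots> = [(Node ts, Node [])]"
      using reduced by (simp add: vee_eq_Node_if_reduced vee_eq_unit_iff)
    finally show ?thesis .
  qed
qed

lemma count_list_filter: "P x \<Longrightarrow> count_list (filter P xs) x = count_list xs x"
  by (induction xs) auto

lemma count_list_cop_unit_right:
  assumes "monomial T"
  shows "count_list (cop T) (A, Node []) = (if A = T then 1 else 0)"
proof -
  have "count_list (cop T) (A, Node []) =
      count_list (filter (\<lambda>p. snd p = Node []) (cop T)) (A, Node [])"
    by (simp add: count_list_filter)
  then show ?thesis by (simp add: filter_cop_unit_right[OF assms])
qed

lemma deg_pos_if_reduced_ne: "reduced_ne T \<Longrightarrow> 0 < deg T"
proof (induction T)
  case (Leaf x)
  then show ?case by simp
next
  case (Node ts)
  then obtain t where "t \<in> set ts" by (cases ts) auto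
  with Node have "0 < deg t" "deg t \<le> sum_list (map deg ts)"
    by (auto simp: member_le_sum_list)
  then show ?case by simp
qed

lemma deg_pos_if_monomial: "monomial T \<Longrightarrow> T \<noteq> Node [] \<Longrightarrow> 0 < deg T"
  by (auto simp: monomial_def deg_pos_if_reduced_ne)

lemma coadd_swap: "coadd f (B, A) = coadd f (A, B)"
  unfolding coadd_def by (simp add: count_list_cop_swap)

lemma coadd_unit_right:
  assumes "f \<in> KX"
  shows "coadd f (A, Node []) = f A"
proof -
  have "coadd f (A, Node []) = (\<Sum>T\<in>{T. f T \<noteq> 0}. if T = A then f T else 0)"
    unfolding coadd_def using assms
    by (intro sum.cong) (auto simp: KX_def count_list_cop_unit_right)
  also have "\<dots> = f A"
    using assms by (simp add: KX_def sum.delta')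
  finally show ?thesis .
qed

lemma coadd_eq_0_unless_deg_sum:
  assumes "f \<in> KX" "homogeneous n f"
    and "\<not> (monomial A \<and> monomial B \<and> deg A + deg B = n)"
  shows "coadd f (A, B) = 0"
  unfolding coadd_def
proof (intro sum.neutral ballI)
  fix T assume "T \<in> {T. f T \<noteq> 0}"
  then have "monomial T" "deg T = n"
    using assms(1,2) by (auto simp: KX_def homogeneous_def)
  then have "(A, B) \<notin> set (cop T)"
    using assms(3) deg_mem_cop monomial_mem_cop by blast
  then show "f T * of_nat (count_list (cop T) (A, B)) = 0"
    by (simp add: count_list_0_iff)
qed

lemma primitive_iff_coadd_vanishes_off_units:
  fixes f :: "'x tree \<Rightarrow> 'k::field_char_0"
  assumes "f \<in> KX"
  shows "primitive f \<longleftrightarrow>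
    f (Node []) = 0 \<and> (\<forall>A B. A \<noteq> Node [] \<longrightarrow> B \<noteq> Node [] \<longrightarrow> coadd f (A, B) = 0)"
proof -
  have "primitive f \<longleftrightarrow> (\<forall>A B. coadd f (A, B) =
      (if B = Node [] then f A else 0) + (if A = Node [] then f B else 0))"
    unfolding primitive_def by (auto simp: fun_eq_iff)
  moreover have "coadd f (Node [], Node []) = f (Node [])" "coadd f (Node [], B) = f B" for B
    using coadd_unit_right[OF assms] coadd_swap by metis+
  ultimately show ?thesis
    by (auto simp: coadd_unit_right[OF assms])
qed

lemma coadd_vanishes_off_units_iff_partial_low_degree:
  fixes f :: "'x tree \<Rightarrow> 'k::field"
  assumes "f \<in> KX" "homogeneous n f"
  shows "(\<forall>A B. A \<noteq> Node [] \<longrightarrow> B \<noteq> Node [] \<longrightarrow> coadd f (A, B) = 0) \<longleftrightarrow>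
    (\<forall>T. monomial T \<and> 1 \<le> deg T \<and> 2 * deg T \<le> n \<longrightarrow> partial T f = (\<lambda>_. 0))"
proof (intro iffI allI impI)
  fix T :: "'x tree"
  assume vanish: "\<forall>A B. A \<noteq> Node [] \<longrightarrow> B \<noteq> Node [] \<longrightarrow> coadd f (A, B) = 0"
    and T: "monomial T \<and> 1 \<le> deg T \<and> 2 * deg T \<le> n"
  then have "T \<noteq> Node []" by auto
  moreover have "f T = 0"
    using assms(2) T by (auto simp: homogeneous_def)
  ultimately show "partial T f = (\<lambda>_. 0)"
    using vanish coadd_unit_right[OF assms(1), of T] unfolding partial_def fun_eq_iff by metis
next
  fix A B :: "'x tree"
  assume low: "\<forall>T. monomial T \<and> 1 \<le> deg T \<and> 2 * deg T \<le> n \<longrightarrow> partial T f = (\<lambda>_. 0)"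
    and "A \<noteq> Node []" "B \<noteq> Node []"
  show "coadd f (A, B) = 0"
  proof (cases "monomial A \<and> monomial B \<and> deg A + deg B = n")
    case False
    then show ?thesis by (rule coadd_eq_0_unless_deg_sum[OF assms])
  next
    case True
    with \<open>A \<noteq> Node []\<close> \<open>B \<noteq> Node []\<close> have "1 \<le> deg A" "1 \<le> deg B"
      using deg_pos_if_monomial by (auto simp: Suc_le_eq)
    moreover have "2 * deg A \<le> n \<or> 2 * deg B \<le> n"
      using True by linarith
    ultimately show ?thesis
      using low True coadd_swap[of f A B] unfolding partial_def by metis
  qed
qed

theorem lemma4p3p10:
  fixes f :: "'x::countable tree \<Rightarrow> 'k::field_char_0" and n :: nat
  assumes "f \<in> KX" and "homogeneous n f" and "1 \<le> n"
  shows "primitive f \<longleftrightarrow>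
    (\<forall>T. monomial T \<and> 1 \<le> deg T \<and> real (deg T) < (real n + 1) / 2 \<longrightarrow> partial T f = (\<lambda>_. 0))"
proof -
  have degree_bound: "real k < (real n + 1) / 2 \<longleftrightarrow> 2 * k \<le> n" for k
  proof -
    have "real k < (real n + 1) / 2 \<longleftrightarrow> real (2 * k) < real (n + 1)"
      by (simp add: field_simps)
    then show ?thesis by (simp only: of_nat_less_iff) linarith
  qed
  have "f (Node []) = 0"
    using assms(2,3) by (auto simp: homogeneous_def)
  then have "primitive f \<longleftrightarrow>
      (\<forall>A B. A \<noteq> Node [] \<longrightarrow> B \<noteq> Node [] \<longrightarrow> coadd f (A, B) = 0)"
    by (simp add: primitive_iff_coadd_vanishes_off_units[OF assms(1)])
  also have "\<dots> \<longleftrightarrow>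
      (\<forall>T. monomial T \<and> 1 \<le> deg T \<and> 2 * deg T \<le> n \<longrightarrow> partial T f = (\<lambda>_. 0))"
    by (rule coadd_vanishes_off_units_iff_partial_low_degree[OF assms(1,2)])
  finally show ?thesis
    by (simp only: degree_bound)
qed

end
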